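(* Let $(X,\mathcal{M})$ be a measurable space, $\Sigma$ a compact Hausdorff group with Haar probability measure $\mu_\Sigma$ acting measurably on $X$ via $T_\sigma$, and let $\Gamma\subset\mathcal{M}_b(X)$ satisfy $S_\Sigma[\Gamma]\subset\Gamma$. Then for all $P,Q\in\mathcal{P}(X)$ (not necessarily $\Sigma$-invariant), $D_f^{\Gamma^{\mathrm{inv}}_\Sigma}(Q\|P)=D_f^\Gamma(S^\Sigma[Q]\|S^\Sigma[P])$ and $W^{\Gamma^{\mathrm{inv}}_\Sigma}(Q,P)=W^\Gamma(S^\Sigma[Q],S^\Sigma[P])$.
   Context: $S_\Sigma[\gamma](x)=\int_\Sigma\gamma(T_\sigma(x))\mu_\Sigma(d\sigma)$; $S^\Sigma[P]$ is the probability measure with $E_{S^\Sigma[P]}[\gamma]=E_P[S_\Sigma[\gamma]]$ for $\gamma\in\mathcal{M}_b(X)$. $\Gamma^{\mathrm{inv}}_\Sigma=\{\gamma\in\Gamma:\gamma\circ T_\sigma=\gamma\ \forall\sigma\}$. $f:[0,\infty)\to\mathbb{R}$ convex, lower semicontinuous, $f(1)=0$, strictly convex at $1$, with Legendre transform $f^*$; $D_f^\Gamma(Q\|P)=\sup_{\gamma\in\Gamma}\{E_Q[\gamma]-\inf_{\nu\in\mathbb{R}}(\nu+E_P[f^*(\gamma-\nu)])\}$; $W^\Gamma(Q,P)=\sup_{\gamma\in\Gamma}\{E_Q[\gamma]-E_P[\gamma]\}$. *)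

theory Defs
  imports "HOL-Probability.Probability"
begin

text \<open>The group \<Sigma> is modelled as a type of class topological_group_add
  (additive notation, commutativity NOT assumed); compactness and the Hausdorff
  property are stated as explicit hypotheses / the class t2_space.\<close>

definition haar_probability :: "'g::{topological_group_add,t2_space} measure \<Rightarrow> bool" where
  "haar_probability \<mu> \<longleftrightarrow>
     sets \<mu> = sets borel \<and> prob_space \<mu> \<and>
     (\<forall>g. distr \<mu> \<mu> (\<lambda>s. g + s) = \<mu>) \<and>
     (\<forall>g. distr \<mu> \<mu> (\<lambda>s. s + g) = \<mu>) \<and>
     (\<forall>A\<in>sets borel. emeasure \<mu> A = (SUP K\<in>{K. compact K \<and> K \<subseteq> A}. emeasure \<mu> K))"

definition measurable_action :: "'a measure \<Rightarrow> ('g::{topological_group_add} \<Rightarrow> 'a \<Rightarrow> 'a) \<Rightarrow> bool" where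
  "measurable_action M T \<longleftrightarrow>
     (\<lambda>(s, x). T s x) \<in> measurable (borel \<Otimes>\<^sub>M M) M \<and>
     (\<forall>x\<in>space M. T 0 x = x) \<and>
     (\<forall>s t. \<forall>x\<in>space M. T (s + t) x = T s (T t x))"

definition bounded_measurable :: "'a measure \<Rightarrow> ('a \<Rightarrow> real) set" where
  "bounded_measurable M = {g \<in> borel_measurable M. \<exists>C. \<forall>x\<in>space M. \<bar>g x\<bar> \<le> C}"

definition sym_fun :: "'g measure \<Rightarrow> ('g \<Rightarrow> 'a \<Rightarrow> 'a) \<Rightarrow> ('a \<Rightarrow> real) \<Rightarrow> 'a \<Rightarrow> real" where
  "sym_fun \<mu> T g x = (\<integral>s. g (T s x) \<partial>\<mu>)"

definition sym_measure :: "'a measure \<Rightarrow> 'g measure \<Rightarrow> ('g \<Rightarrow> 'a \<Rightarrow> 'a) \<Rightarrow> 'a measure \<Rightarrow> 'a measure" where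
  "sym_measure M \<mu> T P = (THE R. prob_space R \<and> sets R = sets M \<and>
      (\<forall>g\<in>bounded_measurable M. (\<integral>x. g x \<partial>R) = (\<integral>x. sym_fun \<mu> T g x \<partial>P)))"

definition inv_part :: "'a measure \<Rightarrow> ('g \<Rightarrow> 'a \<Rightarrow> 'a) \<Rightarrow> ('a \<Rightarrow> real) set \<Rightarrow> ('a \<Rightarrow> real) set" where
  "inv_part M T \<Gamma> = {g \<in> \<Gamma>. \<forall>s. \<forall>x\<in>space M. g (T s x) = g x}"

definition legendre :: "(real \<Rightarrow> real) \<Rightarrow> real \<Rightarrow> ereal" where
  "legendre f y = (SUP x\<in>{0..}. ereal (x * y - f x))"

definition ereal_expect :: "'a measure \<Rightarrow> ('a \<Rightarrow> ereal) \<Rightarrow> ereal" where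
  "ereal_expect P h = enn2ereal (\<integral>\<^sup>+x. e2ennreal (h x) \<partial>P) - enn2ereal (\<integral>\<^sup>+x. e2ennreal (- h x) \<partial>P)"

definition f_gamma_div :: "(real \<Rightarrow> real) \<Rightarrow> ('a \<Rightarrow> real) set \<Rightarrow> 'a measure \<Rightarrow> 'a measure \<Rightarrow> ereal" where
  "f_gamma_div f \<Gamma> Q P = (SUP g\<in>\<Gamma>. ereal (\<integral>x. g x \<partial>Q)
      - (INF \<nu>\<in>(UNIV::real set). ereal \<nu> + ereal_expect P (\<lambda>x. legendre f (g x - \<nu>))))"

definition gamma_ipm :: "('a \<Rightarrow> real) set \<Rightarrow> 'a measure \<Rightarrow> 'a measure \<Rightarrow> ereal" where
  "gamma_ipm \<Gamma> Q P = (SUP g\<in>\<Gamma>. ereal ((\<integral>x. g x \<partial>Q) - (\<integral>x. g x \<partial>P)))"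

definition lsc_on_nonneg :: "(real \<Rightarrow> real) \<Rightarrow> bool" where
  "lsc_on_nonneg f \<longleftrightarrow> (\<forall>x\<ge>0. \<forall>e>0. \<forall>\<^sub>F y in at x within {0..}. f x - e < f y)"

definition strictly_convex_at_1 :: "(real \<Rightarrow> real) \<Rightarrow> bool" where
  "strictly_convex_at_1 f \<longleftrightarrow> (\<forall>x y t. 0 \<le> x \<and> x < 1 \<and> 1 < y \<and> 0 < t \<and> t < 1 \<and>
      t * x + (1 - t) * y = 1 \<longrightarrow> f 1 < t * f x + (1 - t) * f y)"

end

theory Submission
  imports Defs
begin

(* Realise the symmetrization S^Sigma[P] as the law of T_sigma(x) for (sigma, x) distributed
   as mu_Sigma x P; then E_{S^Sigma[P]}[gamma] = E_P[S_Sigma[gamma]] by Fubini, and S_Sigma[gamma]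
   is Sigma-invariant by right invariance of the Haar measure.  A Sigma-invariant gamma has the
   same expectations under P and S^Sigma[P], so it contributes the same value to both
   variational formulas.  Conversely, every gamma in Gamma is dominated by S_Sigma[gamma], which
   lies in Gamma^inv: the linear terms agree, and Jensen's inequality for the convex function f*
   gives E_P[f*(S_Sigma[gamma] - nu)] <= E_{S^Sigma[P]}[f*(gamma - nu)].
   Since f* is a supremum of affine functions it is convex whatever f is. *)

lemma e2ennreal_shift_add:
  fixes y :: ereal
  assumes "0 \<le> c" "- ereal c \<le> y"
  shows "e2ennreal (y + ereal c) + e2ennreal (- y) = e2ennreal y + ennreal c"
proof (cases y)
  case (real r)
  show ?thesis
  proof (cases "0 \<le> r")
    case True
    then show ?thesis using real assms(1) by (simp add: ennreal_neg)
  next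
    case False
    then have "ennreal (r + c) + ennreal (- r) = ennreal c"
      using real assms by (simp flip: ennreal_plus)
    then show ?thesis using real False by (simp add: ennreal_neg)
  qed
qed (use assms in auto)

lemma enn2ereal_diff_eq_shift:
  fixes A C :: ennreal
  assumes ABC: "A + ennreal b = C + ennreal c" and "0 \<le> b" "0 \<le> c"
  shows "enn2ereal C - ereal b = enn2ereal A - ereal c"
proof (cases C rule: ennreal_cases)
  case (real r)
  then have "A + ennreal b = ennreal (r + c)"
    using ABC assms(3) by simp
  then obtain a where a: "A = ennreal a" "0 \<le> a"
    by (cases A rule: ennreal_cases) auto
  then have "ennreal (a + b) = ennreal (r + c)"
    using ABC real assms(2,3) by simp
  then have "a + b = r + c"
    using a real assms(2,3) by (subst (asm) ennreal_inj) auto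
  then show ?thesis
    using a real by simp
next
  case top
  then have "A = top"
    using ABC by (simp add: ennreal_add_eq_top)
  then show ?thesis
    using top by simp
qed

(* For integrands bounded below, the two-part expectation is a single nonnegative integral,
   the form Tonelli's theorem applies to. *)
lemma ereal_expect_shift:
  assumes P: "prob_space P" and h: "h \<in> borel_measurable P"
    and c: "0 \<le> c" and lb: "\<And>x. x \<in> space P \<Longrightarrow> - ereal c \<le> h x"
  shows "ereal_expect P h = enn2ereal (\<integral>\<^sup>+x. e2ennreal (h x + ereal c) \<partial>P) - ereal c"
proof -
  interpret prob_space P by (rule P)
  define A where "A = (\<integral>\<^sup>+x. e2ennreal (h x + ereal c) \<partial>P)"
  define B where "B = (\<integral>\<^sup>+x. e2ennreal (- h x) \<partial>P)"
  define C where "C = (\<integral>\<^sup>+x. e2ennreal (h x) \<partial>P)"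
  have "A + B = (\<integral>\<^sup>+x. e2ennreal (h x + ereal c) + e2ennreal (- h x) \<partial>P)"
    unfolding A_def B_def using h by (intro nn_integral_add[symmetric]) auto
  also have "\<dots> = (\<integral>\<^sup>+x. e2ennreal (h x) + ennreal c \<partial>P)"
    using e2ennreal_shift_add[OF c lb] by (intro nn_integral_cong) auto
  also have "\<dots> = C + ennreal c"
    unfolding C_def using h by (subst nn_integral_add) (auto simp: emeasure_space_1)
  finally have ABC: "A + B = C + ennreal c" .
  have "B \<le> (\<integral>\<^sup>+x. ennreal c \<partial>P)"
    unfolding B_def
  proof (rule nn_integral_mono)
    fix x assume "x \<in> space P"
    then have "- h x \<le> ereal c"
      using lb by (simp add: ereal_uminus_le_reorder)
    then show "e2ennreal (- h x) \<le> ennreal c"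
      by (metis e2ennreal_ereal e2ennreal_mono)
  qed
  also have "\<dots> = ennreal c"
    by (simp add: emeasure_space_1)
  finally obtain b where b: "B = ennreal b" "0 \<le> b"
    by (cases B rule: ennreal_cases) (simp_all add: top_unique)
  have "ereal_expect P h = enn2ereal C - ereal b"
    unfolding ereal_expect_def C_def B_def[symmetric] b(1) using b(2) by simp
  also have "\<dots> = enn2ereal A - ereal c"
    using ABC b c by (intro enn2ereal_diff_eq_shift) auto
  finally show ?thesis
    unfolding A_def .
qed

lemma ereal_le_legendre: "0 \<le> t \<Longrightarrow> ereal (t * y - f t) \<le> legendre f y"
  unfolding legendre_def by (rule SUP_upper) auto

lemma legendre_ge_neg_abs: "- ereal \<bar>f 0\<bar> \<le> legendre f y"
  using ereal_le_legendre[of 0 y f] by (rule order_trans[rotated]) auto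

lemma legendre_mono: "y \<le> y' \<Longrightarrow> legendre f y \<le> legendre f y'"
  unfolding legendre_def by (rule SUP_mono) (auto intro!: bexI mult_left_mono)

lemma borel_measurable_legendre [measurable]: "legendre f \<in> borel_measurable borel"
proof (rule borel_measurableI_greater)
  fix a
  have "is_interval {y. a < legendre f y}"
    unfolding is_interval_1 using legendre_mono
    by (metis (mono_tags, lifting) mem_Collect_eq order_less_le_trans)
  then show "{y \<in> space borel. a < legendre f y} \<in> sets borel"
    using real_interval_borel_measurable by simp
qed

(* Jensen's inequality for the Legendre transform f*, shifted by c so that the right-hand
   side is a nonnegative integral. *)
lemma legendre_integral_le:
  assumes N: "prob_space N" and u: "integrable N u"
  shows "legendre f (\<integral>s. u s \<partial>N) + ereal c
    \<le> enn2ereal (\<integral>\<^sup>+s. e2ennreal (legendre f (u s) + ereal c) \<partial>N)"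
    (is "_ \<le> enn2ereal ?I")
proof -
  interpret prob_space N by (rule N)
  have "ereal (t * (\<integral>s. u s \<partial>N) - f t) \<le> enn2ereal ?I - ereal c" if t: "0 \<le> t" for t
  proof (cases "?I = top")
    case False
    then obtain r where r: "?I = ennreal r" "0 \<le> r" by (cases ?I rule: ennreal_cases) auto
    have "(\<integral>\<^sup>+s. ennreal (t * u s - f t + c) \<partial>N) \<le> ?I"
    proof (rule nn_integral_mono)
      fix s
      have "ereal (t * u s - f t + c) = ereal (t * u s - f t) + ereal c" by simp
      also have "\<dots> \<le> legendre f (u s) + ereal c"
        using ereal_le_legendre[OF t] by (rule add_right_mono)
      finally show "ennreal (t * u s - f t + c) \<le> e2ennreal (legendre f (u s) + ereal c)"
        by (metis e2ennreal_ereal e2ennreal_mono)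
    qed
    then have "(\<integral>s. t * u s - f t + c \<partial>N) \<le> r"
      using r by (intro integral_real_bounded) auto
    moreover have "(\<integral>s. t * u s - f t + c \<partial>N) = t * (\<integral>s. u s \<partial>N) - f t + c"
      using u by (simp add: prob_space)
    ultimately show ?thesis using r by simp
  qed simp
  then have "legendre f (\<integral>s. u s \<partial>N) \<le> enn2ereal ?I - ereal c"
    unfolding legendre_def by (intro SUP_least) auto
  then show ?thesis by (simp add: ereal_le_minus)
qed

lemma ereal_expect_legendre:
  assumes "prob_space N" "g \<in> borel_measurable N"
  shows "ereal_expect N (\<lambda>x. legendre f (g x))
    = enn2ereal (\<integral>\<^sup>+x. e2ennreal (legendre f (g x) + ereal \<bar>f 0\<bar>) \<partial>N) - ereal \<bar>f 0\<bar>"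
proof (rule ereal_expect_shift)
  show "(\<lambda>x. legendre f (g x)) \<in> borel_measurable N"
    using assms(2) by measurable
qed (use assms(1) legendre_ge_neg_abs in auto)

definition f_div_objective :: "(real \<Rightarrow> real) \<Rightarrow> 'a measure \<Rightarrow> 'a measure \<Rightarrow> ('a \<Rightarrow> real) \<Rightarrow> ereal" where
  "f_div_objective f Q P g = ereal (\<integral>x. g x \<partial>Q)
      - (INF \<nu>\<in>(UNIV::real set). ereal \<nu> + ereal_expect P (\<lambda>x. legendre f (g x - \<nu>)))"

lemma f_gamma_div_eq_SUP: "f_gamma_div f \<Gamma> Q P = (SUP g\<in>\<Gamma>. f_div_objective f Q P g)"
  unfolding f_gamma_div_def f_div_objective_def ..

locale haar_action =
  fixes M :: "'a measure"
    and \<mu> :: "'g::{topological_group_add,t2_space} measure"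
    and T :: "'g \<Rightarrow> 'a \<Rightarrow> 'a"
  assumes haar: "haar_probability \<mu>"
    and action: "measurable_action M T"
begin

lemma prob_space_haar: "prob_space \<mu>"
  using haar unfolding haar_probability_def by blast

sublocale haar: prob_space \<mu>
  by (rule prob_space_haar)

lemma sets_haar: "sets \<mu> = sets borel"
  using haar unfolding haar_probability_def by blast

lemma space_haar: "space \<mu> = UNIV"
  using sets_eq_imp_space_eq[OF sets_haar] by simp

lemma distr_haar_add_right: "distr \<mu> \<mu> (\<lambda>s. s + g) = \<mu>"
  using haar unfolding haar_probability_def by blast

lemma action_add: "x \<in> space M \<Longrightarrow> T (s + t) x = T s (T t x)"
  using action unfolding measurable_action_def by blast

lemma measurable_action_pair:
  assumes "sets P = sets M"
  shows "(\<lambda>(s, x). T s x) \<in> measurable (\<mu> \<Otimes>\<^sub>M P) M"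
  unfolding measurable_cong_sets[OF sets_pair_measure_cong[OF sets_haar assms] refl]
  using action unfolding measurable_action_def by blast

lemma action_in_space: "x \<in> space M \<Longrightarrow> T s x \<in> space M"
  using measurable_space[OF measurable_action_pair[of M], of "(s, x)"]
  by (simp add: space_pair_measure space_haar)

lemma measurable_action_orbit:
  assumes "x \<in> space M"
  shows "(\<lambda>s. T s x) \<in> measurable \<mu> M"
  using measurable_compose[OF measurable_Pair[OF measurable_ident_sets[OF refl] measurable_const[OF assms]]
      measurable_action_pair[of M]]
  by simp

definition sym_distr :: "'a measure \<Rightarrow> 'a measure" where
  "sym_distr P = distr (\<mu> \<Otimes>\<^sub>M P) M (\<lambda>(s, x). T s x)"

lemma sets_sym_distr [simp]: "sets (sym_distr P) = sets M"
  unfolding sym_distr_def by simp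

lemma prob_space_sym_distr:
  assumes "prob_space P" "sets P = sets M"
  shows "prob_space (sym_distr P)"
proof -
  interpret P: prob_space P by (rule assms(1))
  interpret pair: pair_prob_space \<mu> P ..
  show ?thesis
    unfolding sym_distr_def
    by (rule prob_space.prob_space_distr[OF pair.prob_space_axioms measurable_action_pair[OF assms(2)]])
qed

definition invariant :: "('a \<Rightarrow> 'b) \<Rightarrow> bool" where
  "invariant g \<longleftrightarrow> (\<forall>s. \<forall>x\<in>space M. g (T s x) = g x)"

lemma nn_integral_sym_distr:
  assumes P: "prob_space P" "sets P = sets M" and h: "h \<in> borel_measurable M"
  shows "(\<integral>\<^sup>+y. h y \<partial>sym_distr P) = (\<integral>\<^sup>+x. (\<integral>\<^sup>+s. h (T s x) \<partial>\<mu>) \<partial>P)"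
proof -
  interpret P: prob_space P by (rule P(1))
  interpret pair: pair_prob_space \<mu> P ..
  have "(\<integral>\<^sup>+y. h y \<partial>sym_distr P) = (\<integral>\<^sup>+z. h (case z of (s, x) \<Rightarrow> T s x) \<partial>(\<mu> \<Otimes>\<^sub>M P))"
    unfolding sym_distr_def using h by (intro nn_integral_distr[OF measurable_action_pair[OF P(2)]]) simp
  also have "\<dots> = (\<integral>\<^sup>+x. (\<integral>\<^sup>+s. h (T s x) \<partial>\<mu>) \<partial>P)"
    using measurable_compose[OF measurable_action_pair[OF P(2)] h]
    by (subst pair.nn_integral_snd[symmetric]) (simp_all add: split_beta')
  finally show ?thesis .
qed

lemma integral_sym_distr:
  assumes P: "prob_space P" "sets P = sets M" and g: "g \<in> bounded_measurable M"
  shows "(\<integral>x. g x \<partial>sym_distr P) = (\<integral>x. sym_fun \<mu> T g x \<partial>P)"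
proof -
  interpret P: prob_space P by (rule P(1))
  interpret pair: pair_prob_space \<mu> P ..
  obtain C where gm: "g \<in> borel_measurable M" and C: "\<And>x. x \<in> space M \<Longrightarrow> \<bar>g x\<bar> \<le> C"
    using g unfolding bounded_measurable_def by auto
  have gT: "(\<lambda>(s, x). g (T s x)) \<in> borel_measurable (\<mu> \<Otimes>\<^sub>M P)"
    using measurable_compose[OF measurable_action_pair[OF P(2)] gm] by (simp add: split_beta')
  have "integrable (\<mu> \<Otimes>\<^sub>M P) (\<lambda>(s, x). g (T s x))"
    using gT C measurable_space[OF measurable_action_pair[OF P(2)]]
    by (intro pair.integrable_const_bound[where B=C]) (auto simp: split_beta)
  then have "(\<integral>x. (\<integral>s. g (T s x) \<partial>\<mu>) \<partial>P) = (\<integral>z. g (case z of (s, x) \<Rightarrow> T s x) \<partial>(\<mu> \<Otimes>\<^sub>M P))"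
    by (subst pair.integral_snd) (simp_all add: split_beta')
  also have "\<dots> = (\<integral>x. g x \<partial>sym_distr P)"
    unfolding sym_distr_def using measurable_action_pair[OF P(2)] gm by (rule integral_distr[symmetric])
  finally show ?thesis
    unfolding sym_fun_def ..
qed

lemma sym_measure_eq_sym_distr:
  assumes P: "prob_space P" "sets P = sets M"
  shows "sym_measure M \<mu> T P = sym_distr P"
  unfolding sym_measure_def
proof (rule the_equality)
  show "prob_space (sym_distr P) \<and> sets (sym_distr P) = sets M \<and>
      (\<forall>g\<in>bounded_measurable M. (\<integral>x. g x \<partial>sym_distr P) = (\<integral>x. sym_fun \<mu> T g x \<partial>P))"
    using prob_space_sym_distr[OF P] integral_sym_distr[OF P] by simp
next
  fix R assume R: "prob_space R \<and> sets R = sets M \<and>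
      (\<forall>g\<in>bounded_measurable M. (\<integral>x. g x \<partial>R) = (\<integral>x. sym_fun \<mu> T g x \<partial>P))"
  interpret R: prob_space R using R by simp
  interpret S: prob_space "sym_distr P" using prob_space_sym_distr[OF P] .
  show "R = sym_distr P"
  proof (rule measure_eqI)
    show sets: "sets R = sets (sym_distr P)" using R by simp
    fix A assume A: "A \<in> sets R"
    then have ind: "indicator A \<in> bounded_measurable M"
      using R unfolding bounded_measurable_def by (auto intro!: exI[of _ 1] simp: indicator_def)
    have "measure R A = (\<integral>x. indicator A x \<partial>R)"
      using A by (simp add: R.emeasure_finite)
    also have "\<dots> = (\<integral>x. sym_fun \<mu> T (indicator A) x \<partial>P)"
      using R ind by blast
    also have "\<dots> = (\<integral>x. indicator A x \<partial>sym_distr P)"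
      by (rule integral_sym_distr[OF P ind, symmetric])
    also have "\<dots> = measure (sym_distr P) A"
      using A sets by (simp add: S.emeasure_finite)
    finally have "measure R A = measure (sym_distr P) A" .
    then show "emeasure R A = emeasure (sym_distr P) A"
      by (simp add: R.emeasure_eq_measure S.emeasure_eq_measure)
  qed
qed

lemma sym_fun_action:
  assumes g: "g \<in> borel_measurable M" and x: "x \<in> space M"
  shows "sym_fun \<mu> T g (T s x) = sym_fun \<mu> T g x"
proof -
  have "(\<lambda>\<sigma>. \<sigma> + s) \<in> measurable \<mu> \<mu>"
    unfolding measurable_cong_sets[OF sets_haar sets_haar] by (intro borel_measurable_continuous_onI continuous_intros)
  moreover have "(\<lambda>\<sigma>. g (T \<sigma> x)) \<in> borel_measurable \<mu>"
    using measurable_compose[OF measurable_action_orbit[OF x] g] by (simp add: comp_def)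
  ultimately have "(\<integral>\<sigma>. g (T (\<sigma> + s) x) \<partial>\<mu>) = (\<integral>\<sigma>. g (T \<sigma> x) \<partial>distr \<mu> \<mu> (\<lambda>\<sigma>. \<sigma> + s))"
    by (rule integral_distr[symmetric])
  then show ?thesis
    unfolding sym_fun_def distr_haar_add_right using x by (simp add: action_add)
qed

lemma invariant_sym_fun:
  assumes "g \<in> borel_measurable M" "\<And>x. x \<in> space M \<Longrightarrow> h x = sym_fun \<mu> T g x"
  shows "invariant h"
  using assms sym_fun_action action_in_space unfolding invariant_def by simp

lemma sym_fun_invariant:
  assumes "invariant g" "x \<in> space M"
  shows "sym_fun \<mu> T g x = g x"
  using assms unfolding sym_fun_def invariant_def by (simp add: haar.prob_space)

lemma nn_integral_sym_distr_invariant: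
  assumes P: "prob_space P" "sets P = sets M"
    and h: "h \<in> borel_measurable M" "invariant h"
  shows "(\<integral>\<^sup>+y. h y \<partial>sym_distr P) = (\<integral>\<^sup>+x. h x \<partial>P)"
  unfolding nn_integral_sym_distr[OF P h(1)] using h(2) sets_eq_imp_space_eq[OF P(2)]
  by (intro nn_integral_cong) (simp add: invariant_def haar.emeasure_space_1)

lemma ereal_expect_sym_distr_invariant:
  assumes P: "prob_space P" "sets P = sets M"
    and u: "u \<in> borel_measurable M" "invariant u"
  shows "ereal_expect (sym_distr P) u = ereal_expect P u"
proof -
  have "invariant (\<lambda>x. e2ennreal (u x))" "invariant (\<lambda>x. e2ennreal (- u x))"
    using u(2) unfolding invariant_def by simp_all
  moreover have "(\<lambda>x. e2ennreal (u x)) \<in> borel_measurable M" "(\<lambda>x. e2ennreal (- u x)) \<in> borel_measurable M"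
    using u(1) by measurable
  ultimately show ?thesis
    unfolding ereal_expect_def by (simp add: nn_integral_sym_distr_invariant[OF P])
qed

lemma integral_sym_distr_eq_sym_fun:
  assumes P: "prob_space P" "sets P = sets M" and g: "g \<in> bounded_measurable M"
    and h: "\<And>x. x \<in> space M \<Longrightarrow> h x = sym_fun \<mu> T g x"
  shows "(\<integral>x. g x \<partial>sym_distr P) = (\<integral>x. h x \<partial>P)"
  unfolding integral_sym_distr[OF P g] using h sets_eq_imp_space_eq[OF P(2)]
  by (intro Bochner_Integration.integral_cong) simp_all

lemma integral_sym_distr_invariant:
  assumes P: "prob_space P" "sets P = sets M" and g: "g \<in> bounded_measurable M" "invariant g"
  shows "(\<integral>x. g x \<partial>sym_distr P) = (\<integral>x. g x \<partial>P)"
  using integral_sym_distr_eq_sym_fun[OF P g(1)] sym_fun_invariant[OF g(2)] by simp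

lemma legendre_sym_fun_le_orbit_integral:
  assumes g: "g \<in> bounded_measurable M" and x: "x \<in> space M"
  shows "e2ennreal (legendre f (sym_fun \<mu> T g x - \<nu>) + ereal c)
    \<le> (\<integral>\<^sup>+s. e2ennreal (legendre f (g (T s x) - \<nu>) + ereal c) \<partial>\<mu>)"
proof -
  obtain C where gm: "g \<in> borel_measurable M" and C: "\<And>x. x \<in> space M \<Longrightarrow> \<bar>g x\<bar> \<le> C"
    using g unfolding bounded_measurable_def by auto
  have "(\<lambda>s. g (T s x)) \<in> borel_measurable \<mu>"
    using measurable_compose[OF measurable_action_orbit[OF x] gm] by (simp add: comp_def)
  then have ig: "integrable \<mu> (\<lambda>s. g (T s x))"
    using C action_in_space[OF x] by (intro haar.integrable_const_bound[where B=C]) auto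
  then have "integrable \<mu> (\<lambda>s. g (T s x) - \<nu>)"
    by (intro Bochner_Integration.integrable_diff) auto
  moreover have "(\<integral>s. g (T s x) - \<nu> \<partial>\<mu>) = sym_fun \<mu> T g x - \<nu>"
    using ig by (simp add: sym_fun_def haar.prob_space Bochner_Integration.integral_diff)
  ultimately show ?thesis
    using legendre_integral_le[OF haar.prob_space_axioms, of "\<lambda>s. g (T s x) - \<nu>" f c]
    by (metis e2ennreal_enn2ereal e2ennreal_mono)
qed

lemma ereal_expect_legendre_sym_fun_le:
  assumes P: "prob_space P" "sets P = sets M" and g: "g \<in> bounded_measurable M"
    and h: "h \<in> borel_measurable M" "\<And>x. x \<in> space M \<Longrightarrow> h x = sym_fun \<mu> T g x"
  shows "ereal_expect P (\<lambda>x. legendre f (h x - \<nu>))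
    \<le> ereal_expect (sym_distr P) (\<lambda>x. legendre f (g x - \<nu>))"
proof -
  define L where "L y = e2ennreal (legendre f (g y - \<nu>) + ereal \<bar>f 0\<bar>)" for y
  have gm: "g \<in> borel_measurable M"
    using g unfolding bounded_measurable_def by simp
  have "(\<integral>\<^sup>+x. e2ennreal (legendre f (h x - \<nu>) + ereal \<bar>f 0\<bar>) \<partial>P) \<le> (\<integral>\<^sup>+x. (\<integral>\<^sup>+s. L (T s x) \<partial>\<mu>) \<partial>P)"
    using legendre_sym_fun_le_orbit_integral[OF g] h(2) sets_eq_imp_space_eq[OF P(2)]
    unfolding L_def by (intro nn_integral_mono) simp
  also have "\<dots> = (\<integral>\<^sup>+y. L y \<partial>sym_distr P)"
    using gm unfolding L_def by (intro nn_integral_sym_distr[OF P, symmetric]) simp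
  finally have le: "(\<integral>\<^sup>+x. e2ennreal (legendre f (h x - \<nu>) + ereal \<bar>f 0\<bar>) \<partial>P)
      \<le> (\<integral>\<^sup>+y. L y \<partial>sym_distr P)" .
  have "(\<lambda>x. h x - \<nu>) \<in> borel_measurable P"
    unfolding measurable_cong_sets[OF P(2) refl] using h(1) by simp
  moreover have "(\<lambda>x. g x - \<nu>) \<in> borel_measurable (sym_distr P)"
    unfolding measurable_cong_sets[OF sets_sym_distr refl] using gm by simp
  ultimately show ?thesis
    using le P(1) prob_space_sym_distr[OF P] unfolding L_def
    by (simp add: ereal_expect_legendre ereal_minus_mono less_eq_ennreal.rep_eq)
qed

lemma f_div_objective_sym_distr_invariant:
  assumes P: "prob_space P" "sets P = sets M" and Q: "prob_space Q" "sets Q = sets M"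
    and g: "g \<in> bounded_measurable M" "invariant g"
  shows "f_div_objective f (sym_distr Q) (sym_distr P) g = f_div_objective f Q P g"
proof -
  have "ereal_expect (sym_distr P) (\<lambda>x. legendre f (g x - \<nu>)) = ereal_expect P (\<lambda>x. legendre f (g x - \<nu>))"
    for \<nu>
  proof (rule ereal_expect_sym_distr_invariant[OF P])
    show "(\<lambda>x. legendre f (g x - \<nu>)) \<in> borel_measurable M"
      using g(1) unfolding bounded_measurable_def
      by (auto intro: measurable_compose[OF _ borel_measurable_legendre])
  qed (use g(2) in \<open>simp add: invariant_def\<close>)
  then show ?thesis
    unfolding f_div_objective_def integral_sym_distr_invariant[OF Q g] by simp
qed

lemma f_div_objective_sym_distr_le:
  assumes P: "prob_space P" "sets P = sets M" and Q: "prob_space Q" "sets Q = sets M"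
    and g: "g \<in> bounded_measurable M"
    and h: "h \<in> bounded_measurable M" "\<And>x. x \<in> space M \<Longrightarrow> h x = sym_fun \<mu> T g x"
  shows "f_div_objective f (sym_distr Q) (sym_distr P) g \<le> f_div_objective f Q P h"
proof -
  have "(INF \<nu>. ereal \<nu> + ereal_expect P (\<lambda>x. legendre f (h x - \<nu>)))
      \<le> (INF \<nu>. ereal \<nu> + ereal_expect (sym_distr P) (\<lambda>x. legendre f (g x - \<nu>)))"
    using h(1) ereal_expect_legendre_sym_fun_le[OF P g _ h(2)] unfolding bounded_measurable_def
    by (intro INF_mono) (auto intro: add_left_mono)
  then show ?thesis
    unfolding f_div_objective_def using integral_sym_distr_eq_sym_fun[OF Q g h(2)]
    by (intro ereal_minus_mono) simp_all
qed

lemma SUP_inv_part_eq_SUP: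
  fixes F G :: "('a \<Rightarrow> real) \<Rightarrow> 'b::complete_lattice"
  assumes \<Gamma>: "\<Gamma> \<subseteq> bounded_measurable M"
    and \<Gamma>_sym: "\<forall>g\<in>\<Gamma>. \<exists>h\<in>\<Gamma>. \<forall>x\<in>space M. h x = sym_fun \<mu> T g x"
    and eq: "\<And>g. g \<in> bounded_measurable M \<Longrightarrow> invariant g \<Longrightarrow> F g = G g"
    and le: "\<And>g h. g \<in> bounded_measurable M \<Longrightarrow> h \<in> bounded_measurable M \<Longrightarrow>
      (\<And>x. x \<in> space M \<Longrightarrow> h x = sym_fun \<mu> T g x) \<Longrightarrow> G g \<le> F h"
  shows "(SUP g\<in>inv_part M T \<Gamma>. F g) = (SUP g\<in>\<Gamma>. G g)"
proof (rule SUP_eq)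
  fix g assume "g \<in> inv_part M T \<Gamma>"
  then have "g \<in> \<Gamma>" "invariant g"
    unfolding inv_part_def invariant_def by auto
  then show "\<exists>j\<in>\<Gamma>. F g \<le> G j"
    using \<Gamma> eq by (intro bexI[of _ g]) auto
next
  fix g assume g: "g \<in> \<Gamma>"
  then obtain h where h: "h \<in> \<Gamma>" "\<And>x. x \<in> space M \<Longrightarrow> h x = sym_fun \<mu> T g x"
    using \<Gamma>_sym by auto
  have "invariant h"
    using g h \<Gamma> unfolding bounded_measurable_def by (intro invariant_sym_fun) auto
  then have "h \<in> inv_part M T \<Gamma>"
    using h(1) unfolding inv_part_def invariant_def by simp
  then show "\<exists>i\<in>inv_part M T \<Gamma>. G g \<le> F i"
    using le g h \<Gamma> by blast
qed

end

theorem theorem4: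
  fixes M :: "'a measure"
    and \<mu> :: "'g::{topological_group_add,t2_space} measure"
    and T :: "'g \<Rightarrow> 'a \<Rightarrow> 'a"
    and \<Gamma> :: "('a \<Rightarrow> real) set"
    and f :: "real \<Rightarrow> real"
    and P Q :: "'a measure"
  assumes compact_group: "compact (UNIV :: 'g set)"
    and haar: "haar_probability \<mu>"
    and action: "measurable_action M T"
    and Gamma_sub: "\<Gamma> \<subseteq> bounded_measurable M"
    and Gamma_sym: "\<forall>g\<in>\<Gamma>. \<exists>h\<in>\<Gamma>. \<forall>x\<in>space M. h x = sym_fun \<mu> T g x"
    and f_convex: "convex_on {0..} f"
    and f_lsc: "lsc_on_nonneg f"
    and f_1: "f 1 = 0"
    and f_strict: "strictly_convex_at_1 f"
    and P: "prob_space P" "sets P = sets M"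
    and Q: "prob_space Q" "sets Q = sets M"
  shows "f_gamma_div f (inv_part M T \<Gamma>) Q P
           = f_gamma_div f \<Gamma> (sym_measure M \<mu> T Q) (sym_measure M \<mu> T P)
       \<and> gamma_ipm (inv_part M T \<Gamma>) Q P
           = gamma_ipm \<Gamma> (sym_measure M \<mu> T Q) (sym_measure M \<mu> T P)"
proof -
  interpret haar_action M \<mu> T
    using haar action by unfold_locales
  have "f_gamma_div f (inv_part M T \<Gamma>) Q P = f_gamma_div f \<Gamma> (sym_distr Q) (sym_distr P)"
    unfolding f_gamma_div_eq_SUP using Gamma_sub Gamma_sym
    by (intro SUP_inv_part_eq_SUP f_div_objective_sym_distr_invariant[OF P Q, symmetric]
        f_div_objective_sym_distr_le[OF P Q])
  moreover have "gamma_ipm (inv_part M T \<Gamma>) Q P = gamma_ipm \<Gamma> (sym_distr Q) (sym_distr P)"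
    unfolding gamma_ipm_def using Gamma_sub Gamma_sym
  proof (rule SUP_inv_part_eq_SUP)
    fix g h assume g: "g \<in> bounded_measurable M"
      and h: "\<And>x. x \<in> space M \<Longrightarrow> h x = sym_fun \<mu> T g x"
    then show "ereal ((\<integral>x. g x \<partial>sym_distr Q) - (\<integral>x. g x \<partial>sym_distr P))
        \<le> ereal ((\<integral>x. h x \<partial>Q) - (\<integral>x. h x \<partial>P))"
      using integral_sym_distr_eq_sym_fun[OF P g h] integral_sym_distr_eq_sym_fun[OF Q g h] by simp
  qed (simp add: integral_sym_distr_invariant[OF P] integral_sym_distr_invariant[OF Q])
  ultimately show ?thesis
    using sym_measure_eq_sym_distr[OF P] sym_measure_eq_sym_distr[OF Q] by simp
qed

end
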